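(* In the fixed-routing setting, let $y=[y_i(k)]_{k\in\mathcal C,\,i\notin\mathcal S_k}\in[0,1]^{n}$, and define $$A(y)=T(\mathbf 0)-\sum_{(i,j)\in\mathcal E}D_{ij}(F_{ij}(y)),\qquad B(y)=\sum_{i\in\mathcal V}B_i(Y_i),$$ where $T(\mathbf 0)=\sum_{(i,j)}D_{ij}(F_{ij}(\mathbf 0))$ is assumed finite. Then $A$ is nonnegative, monotonically nondecreasing and DR-submodular on $[0,1]^n$, and $B$ is convex. Hence maximizing $G(y)=A(y)-B(y)$ over $[0,1]^n$ is a "DR-submodular + concave" maximization problem.
   Context: Network model: finite directed graph $(\mathcal V,\mathcal E)$ with symmetric links, finite catalog $\mathcal C$, designated server sets $\mathcal S_k\neq\emptyset$, exogenous request rates $r_v(k)\ge0$; each $D_{ij}$, $B_i$ is twice continuously differentiable, increasing, convex, with value $0$ at $0$; $Y_i=\sum_k y_i(k)$. Fixed routing: for each $k$ and each $i\notin\mathcal S_k$ there is a fixed next hop $j_i(k)\in\mathcal N(i)$. For each $v$ and $k$, the path $p_{vk}=(p^1_{vk},\dots,p^{|p_{vk}|}_{vk})$ is defined by $p^1_{vk}=v$, $p^{l+1}_{vk}=j_{p^l_{vk}}(k)$, ending at a node $s_k\in\mathcal S_k$; every such path is assumed loop-free with no intermediate node in $\mathcal S_k$. $(i,j)\in p_{vk}$ means $i,j$ are consecutive on $p_{vk}$; $l_{p_{vk}}(i)$ is the position of $i$ on $p_{vk}$. The link flows are $$f_{ji}(k)=\sum_{v:(i,j)\in p_{vk}}r_v(k)\prod_{l'=1}^{l_{p_{vk}}(i)}\big(1-y_{p^{l'}_{vk}}(k)\big),\qquad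 F_{ji}=\sum_k f_{ji}(k).$$ A function $A$ on a box $[0,1]^n$ is DR-submodular if for all $a\le b$ (coordinatewise), every coordinate vector $e_m$ and every $\epsilon\ge0$ with $a+\epsilon e_m,b+\epsilon e_m$ in the box, $A(a+\epsilon e_m)-A(a)\ge A(b+\epsilon e_m)-A(b)$ (for twice differentiable $A$, equivalently all second partial derivatives are $\le 0$). *)

theory Defs
  imports "HOL-Analysis.Analysis"
begin

definition route_path :: "('v \<Rightarrow> 'k \<Rightarrow> 'v) \<Rightarrow> ('k \<Rightarrow> 'v set) \<Rightarrow> 'v \<Rightarrow> 'k \<Rightarrow> 'v list" where
  "route_path nh S v k =
     map (\<lambda>l. ((\<lambda>i. nh i k) ^^ l) v) [0..<Suc (LEAST n. ((\<lambda>i. nh i k) ^^ n) v \<in> S k)]"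

text \<open>Flow f_ji(k) (0-indexed positions: i = p!m, j = p!(m+1); product over
  positions 0..m, i.e. the paper's l' = 1..l_p(i)).\<close>
definition flow_k :: "'v set \<Rightarrow> ('v \<Rightarrow> 'k \<Rightarrow> 'v) \<Rightarrow> ('k \<Rightarrow> 'v set) \<Rightarrow> ('v \<Rightarrow> 'k \<Rightarrow> real)
    \<Rightarrow> ('v \<times> 'k \<Rightarrow> real) \<Rightarrow> 'v \<Rightarrow> 'v \<Rightarrow> 'k \<Rightarrow> real" where
  "flow_k V nh S r y j i k =
     (\<Sum>v\<in>V. let p = route_path nh S v k in
        \<Sum>m\<in>{m. Suc m < length p \<and> p ! m = i \<and> p ! Suc m = j}.
           r v k * (\<Prod>l\<in>{..m}. (1 - y (p ! l, k))))"

definition flow :: "'v set \<Rightarrow> 'k set \<Rightarrow> ('v \<Rightarrow> 'k \<Rightarrow> 'v) \<Rightarrow> ('k \<Rightarrow> 'v set) \<Rightarrow> ('v \<Rightarrow> 'k \<Rightarrow> real)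
    \<Rightarrow> ('v \<times> 'k \<Rightarrow> real) \<Rightarrow> 'v \<Rightarrow> 'v \<Rightarrow> real" where
  "flow V C nh S r y j i = (\<Sum>k\<in>C. flow_k V nh S r y j i k)"

definition var_index :: "'v set \<Rightarrow> 'k set \<Rightarrow> ('k \<Rightarrow> 'v set) \<Rightarrow> ('v \<times> 'k) set" where
  "var_index V C S = {(i, k). i \<in> V \<and> k \<in> C \<and> i \<notin> S k}"

text \<open>The box [0,1]^I, realised as functions vanishing outside I.\<close>
definition unit_box :: "'a set \<Rightarrow> ('a \<Rightarrow> real) set" where
  "unit_box I = {y. (\<forall>p\<in>I. 0 \<le> y p \<and> y p \<le> 1) \<and> (\<forall>p. p \<notin> I \<longrightarrow> y p = 0)}"

definition dr_submodular_on :: "('a \<Rightarrow> real) set \<Rightarrow> (('a \<Rightarrow> real) \<Rightarrow> real) \<Rightarrow> bool" where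
  "dr_submodular_on X A \<longleftrightarrow>
     (\<forall>a b m (\<epsilon>::real). a \<in> X \<and> b \<in> X \<and> a \<le> b \<and> \<epsilon> \<ge> 0 \<and>
        a(m := a m + \<epsilon>) \<in> X \<and> b(m := b m + \<epsilon>) \<in> X \<longrightarrow>
        A (a(m := a m + \<epsilon>)) - A a \<ge> A (b(m := b m + \<epsilon>)) - A b)"

definition convex_fun_on :: "('a \<Rightarrow> real) set \<Rightarrow> (('a \<Rightarrow> real) \<Rightarrow> real) \<Rightarrow> bool" where
  "convex_fun_on X g \<longleftrightarrow>
     (\<forall>x\<in>X. \<forall>y\<in>X. \<forall>t::real. 0 \<le> t \<and> t \<le> 1 \<longrightarrow>
        g (\<lambda>p. t * x p + (1 - t) * y p) \<le> t * g x + (1 - t) * g y)"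

definition cost_fun :: "(real \<Rightarrow> real) \<Rightarrow> bool" where
  "cost_fun g \<longleftrightarrow>
     (\<exists>g1 g2. (\<forall>x\<ge>0. (g has_real_derivative g1 x) (at x within {0..}) \<and>
                       (g1 has_real_derivative g2 x) (at x within {0..}))
             \<and> continuous_on {0..} g2)
     \<and> mono_on {0..} g \<and> convex_on {0..} g \<and> g 0 = 0"

end

theory Submission
  imports Defs
begin

text \<open>Every link flow is a nonnegative combination of products \<open>\<Prod>(1 - y q)\<close> taken over
  the nodes of a loop-free path prefix. Such a product is antitone in \<open>y\<close>, and raising a
  single coordinate by \<open>\<epsilon>\<close> lowers it by \<open>\<epsilon>\<close> times the product of the remaining factors,
  which is again antitone. So the flows are nonincreasing with nonincreasing decrements;
  composing with a convex nondecreasing cost preserves this, which makes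
  \<open>A = T(0) - \<Sum> D(F(y))\<close> nonnegative, nondecreasing and DR-submodular. \<open>B\<close> is a sum of
  convex functions of linear forms, hence convex.\<close>

lemma convex_on_increment_mono:
  fixes g :: "real \<Rightarrow> real"
  assumes g: "convex_on I g" and "x \<in> I" "z + h \<in> I" "x \<le> z" "0 \<le> h"
  shows "g (x + h) - g x \<le> g (z + h) - g z"
proof (cases "z + h = x")
  case True
  with assms have "h = 0" "z = x" by auto
  then show ?thesis by simp
next
  case False
  then have L: "z + h - x > 0" using assms by auto
  define s where "s = h / (z + h - x)"
  have s: "0 \<le> s" "s \<le> 1" using assms L by (auto simp: s_def field_simps)
  have sL: "s * (z + h - x) = h" using L by (simp add: s_def)
  have "(1 - s) *\<^sub>R x + s *\<^sub>R (z + h) = x + h"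
    using sL by (simp add: algebra_simps)
  then have left: "g (x + h) \<le> (1 - s) * g x + s * g (z + h)"
    using convex_onD[OF g s, of x "z + h"] assms by simp
  have "(1 - (1 - s)) *\<^sub>R x + (1 - s) *\<^sub>R (z + h) = z"
    using sL by (simp add: algebra_simps)
  then have right: "g z \<le> s * g x + (1 - s) * g (z + h)"
    using convex_onD[OF g, of "1 - s" x "z + h"] s assms by simp
  from left right show ?thesis by (simp add: algebra_simps)
qed

text \<open>Shift the larger pair down to \<open>y - (x - x')\<close>: convexity compares equal increments,
  monotonicity absorbs the remaining gap above \<open>y'\<close>.\<close>
lemma convex_mono_on_diff_le:
  fixes g :: "real \<Rightarrow> real"
  assumes g: "convex_on I g" "mono_on I g" and I: "convex I"
    and "x' \<in> I" "y' \<in> I" "y \<in> I" "x' \<le> x" "y' \<le> y" "x \<le> y" "x - x' \<le> y - y'"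
  shows "g x - g x' \<le> g y - g y'"
proof -
  define z where "z = y - (x - x')"
  have z: "z \<in> I"
    using mem_is_interval_1_I[of I x' y z] I assms by (auto simp: is_interval_convex_1 z_def)
  have "g y' \<le> g z" using assms z by (intro mono_onD[OF g(2)]) (auto simp: z_def)
  moreover have "g (x' + (x - x')) - g x' \<le> g (z + (x - x')) - g z"
    using assms z by (intro convex_on_increment_mono[OF g(1)]) (simp_all add: z_def)
  ultimately show ?thesis by (simp add: z_def)
qed

lemma prod_one_minus_upd_decrement:
  fixes x :: "'a \<Rightarrow> real"
  assumes "finite Q"
  shows "(\<Prod>q\<in>Q. 1 - x q) - (\<Prod>q\<in>Q. 1 - (x(n := x n + \<epsilon>)) q)
       = (if n \<in> Q then \<epsilon> * (\<Prod>q\<in>Q - {n}. 1 - x q) else 0)"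
proof (cases "n \<in> Q")
  case True
  have rest: "(\<Prod>q\<in>Q - {n}. 1 - (x(n := x n + \<epsilon>)) q) = (\<Prod>q\<in>Q - {n}. 1 - x q)"
    by (intro prod.cong) auto
  show ?thesis
    using prod.remove[OF assms True, of "\<lambda>q. 1 - x q"]
      prod.remove[OF assms True, of "\<lambda>q. 1 - (x(n := x n + \<epsilon>)) q"] True
    by (simp add: rest algebra_simps)
next
  case False
  then have "(\<Prod>q\<in>Q. 1 - (x(n := x n + \<epsilon>)) q) = (\<Prod>q\<in>Q. 1 - x q)"
    by (intro prod.cong) auto
  with False show ?thesis by simp
qed

lemma prod_one_minus_upd_decrement_antimono:
  fixes a b :: "'a \<Rightarrow> real"
  assumes "finite Q" "a \<le> b" "\<forall>q. b q \<le> 1" "0 \<le> \<epsilon>"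
  shows "(\<Prod>q\<in>Q. 1 - b q) - (\<Prod>q\<in>Q. 1 - (b(n := b n + \<epsilon>)) q)
       \<le> (\<Prod>q\<in>Q. 1 - a q) - (\<Prod>q\<in>Q. 1 - (a(n := a n + \<epsilon>)) q)"
proof -
  have "(\<Prod>q\<in>Q - {n}. 1 - b q) \<le> (\<Prod>q\<in>Q - {n}. 1 - a q)"
    using assms by (intro prod_mono) (auto simp: le_fun_def)
  then show ?thesis
    unfolding prod_one_minus_upd_decrement[OF \<open>finite Q\<close>]
    using assms by (simp add: mult_left_mono)
qed

lemma flow_nonneg:
  assumes "\<forall>v\<in>V. \<forall>k\<in>C. 0 \<le> r v k" "\<forall>q. y q \<le> 1"
  shows "0 \<le> flow V C nh S r y j i"
  unfolding flow_def flow_k_def Let_def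
  using assms by (intro sum_nonneg mult_nonneg_nonneg prod_nonneg) auto

lemma flow_antimono:
  assumes "\<forall>v\<in>V. \<forall>k\<in>C. 0 \<le> r v k" "a \<le> b" "\<forall>q. b q \<le> 1"
  shows "flow V C nh S r b j i \<le> flow V C nh S r a j i"
  unfolding flow_def flow_k_def Let_def
  using assms by (intro sum_mono mult_left_mono prod_mono) (auto simp: le_fun_def)

text \<open>Loop-freeness makes the factors of a path prefix correspond to distinct
  coordinates, so a coordinate change touches at most one factor.\<close>
lemma flow_decrement_antimono:
  assumes route: "\<forall>v\<in>V. \<forall>k\<in>C. distinct (route_path nh S v k) \<and> 0 \<le> r v k"
    and "a \<le> b" "\<forall>q. b q \<le> 1" "0 \<le> \<epsilon>"
  shows "flow V C nh S r b j i - flow V C nh S r (b(n := b n + \<epsilon>)) j i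
       \<le> flow V C nh S r a j i - flow V C nh S r (a(n := a n + \<epsilon>)) j i"
proof -
  have path_term:
    "r v k * (\<Prod>l\<in>{..m}. 1 - b (p ! l, k)) - r v k * (\<Prod>l\<in>{..m}. 1 - (b(n := b n + \<epsilon>)) (p ! l, k))
     \<le> r v k * (\<Prod>l\<in>{..m}. 1 - a (p ! l, k)) - r v k * (\<Prod>l\<in>{..m}. 1 - (a(n := a n + \<epsilon>)) (p ! l, k))"
    if "v \<in> V" "k \<in> C" "p = route_path nh S v k" "m < length p" for v k p m
  proof -
    let ?Q = "(\<lambda>l. (p ! l, k)) ` {..m}"
    have inj: "inj_on (\<lambda>l. (p ! l, k)) {..m}"
      using route that by (auto simp: inj_on_def nth_eq_iff_index_eq)
    have "(\<Prod>q\<in>?Q. 1 - b q) - (\<Prod>q\<in>?Q. 1 - (b(n := b n + \<epsilon>)) q)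
       \<le> (\<Prod>q\<in>?Q. 1 - a q) - (\<Prod>q\<in>?Q. 1 - (a(n := a n + \<epsilon>)) q)"
      using assms by (intro prod_one_minus_upd_decrement_antimono) auto
    then have "(\<Prod>l\<in>{..m}. 1 - b (p ! l, k)) - (\<Prod>l\<in>{..m}. 1 - (b(n := b n + \<epsilon>)) (p ! l, k))
       \<le> (\<Prod>l\<in>{..m}. 1 - a (p ! l, k)) - (\<Prod>l\<in>{..m}. 1 - (a(n := a n + \<epsilon>)) (p ! l, k))"
      by (simp only: prod.reindex[OF inj] comp_def)
    then have "r v k * ((\<Prod>l\<in>{..m}. 1 - b (p ! l, k)) - (\<Prod>l\<in>{..m}. 1 - (b(n := b n + \<epsilon>)) (p ! l, k)))
       \<le> r v k * ((\<Prod>l\<in>{..m}. 1 - a (p ! l, k)) - (\<Prod>l\<in>{..m}. 1 - (a(n := a n + \<epsilon>)) (p ! l, k)))"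
      using route that by (intro mult_left_mono) auto
    then show ?thesis by (simp add: algebra_simps)
  qed
  show ?thesis
    unfolding flow_def flow_k_def Let_def sum_subtractf[symmetric]
    by (intro sum_mono) (use path_term in auto)
qed

lemma cost_sum_flow_antimono:
  fixes D :: "'v \<Rightarrow> 'v \<Rightarrow> real \<Rightarrow> real"
  assumes D: "\<And>i j. (i, j) \<in> E \<Longrightarrow> mono_on {0..} (D i j)"
    and r: "\<forall>v\<in>V. \<forall>k\<in>C. 0 \<le> r v k" and "a \<le> b" "\<forall>q. b q \<le> 1"
  shows "(\<Sum>(i, j)\<in>E. D i j (flow V C nh S r b i j)) \<le> (\<Sum>(i, j)\<in>E. D i j (flow V C nh S r a i j))"
proof (intro sum_mono, clarify)
  fix i j assume "(i, j) \<in> E"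
  moreover have "0 \<le> flow V C nh S r b i j"
    by (rule flow_nonneg) (use assms in auto)
  moreover have "flow V C nh S r b i j \<le> flow V C nh S r a i j"
    by (rule flow_antimono) (use assms in auto)
  ultimately show "D i j (flow V C nh S r b i j) \<le> D i j (flow V C nh S r a i j)"
    by (intro mono_onD[OF D]) auto
qed

lemma cost_sum_flow_decrement_antimono:
  fixes D :: "'v \<Rightarrow> 'v \<Rightarrow> real \<Rightarrow> real"
  assumes D: "\<And>i j. (i, j) \<in> E \<Longrightarrow> convex_on {0..} (D i j) \<and> mono_on {0..} (D i j)"
    and route: "\<forall>v\<in>V. \<forall>k\<in>C. distinct (route_path nh S v k) \<and> 0 \<le> r v k"
    and "a \<le> b" "\<forall>q. b q \<le> 1" "b n + \<epsilon> \<le> 1" "0 \<le> \<epsilon>"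
  shows "(\<Sum>(i, j)\<in>E. D i j (flow V C nh S r b i j)) - (\<Sum>(i, j)\<in>E. D i j (flow V C nh S r (b(n := b n + \<epsilon>)) i j))
       \<le> (\<Sum>(i, j)\<in>E. D i j (flow V C nh S r a i j)) - (\<Sum>(i, j)\<in>E. D i j (flow V C nh S r (a(n := a n + \<epsilon>)) i j))"
proof -
  let ?F = "\<lambda>y i j. flow V C nh S r y i j"
  let ?a' = "a(n := a n + \<epsilon>)" and ?b' = "b(n := b n + \<epsilon>)"
  have r: "\<forall>v\<in>V. \<forall>k\<in>C. 0 \<le> r v k" using route by auto
  have a1: "\<forall>q. a q \<le> 1" using assms(3,4) by (meson le_funD order_trans)
  have a'1: "\<forall>q. ?a' q \<le> 1" and b'1: "\<forall>q. ?b' q \<le> 1"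
    using a1 le_funD[OF assms(3), of n] assms(4,5) by auto
  have bumps: "a \<le> ?a'" "b \<le> ?b'" using assms by (auto simp: le_fun_def)
  have edge: "D i j (?F b i j) - D i j (?F ?b' i j) \<le> D i j (?F a i j) - D i j (?F ?a' i j)"
    if "(i, j) \<in> E" for i j
  proof (rule convex_mono_on_diff_le[where I = "{0..}" and g = "D i j"])
    show "convex_on {0..} (D i j)" "mono_on {0..} (D i j)" using D[OF that] by auto
    show "?F ?a' i j \<in> {0..}" "?F ?b' i j \<in> {0..}" "?F a i j \<in> {0..}"
      using flow_nonneg[OF r] a1 a'1 b'1 by auto
    show "?F ?a' i j \<le> ?F a i j" "?F ?b' i j \<le> ?F b i j" "?F b i j \<le> ?F a i j"
      using flow_antimono[OF r] bumps a'1 b'1 assms(3,4) by auto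
    show "?F b i j - ?F ?b' i j \<le> ?F a i j - ?F ?a' i j"
      using flow_decrement_antimono[OF route assms(3,4,6)] .
  qed (rule convex_real_interval)
  have "(\<Sum>(i, j)\<in>E. D i j (?F b i j) - D i j (?F ?b' i j))
      \<le> (\<Sum>(i, j)\<in>E. D i j (?F a i j) - D i j (?F ?a' i j))"
    by (intro sum_mono) (use edge in auto)
  then show ?thesis by (simp add: sum_subtractf case_prod_beta)
qed

lemma convex_fun_on_sum:
  assumes "\<And>i. i \<in> I \<Longrightarrow> convex_fun_on X (f i)"
  shows "convex_fun_on X (\<lambda>y. \<Sum>i\<in>I. f i y)"
  unfolding convex_fun_on_def
proof (intro ballI allI impI)
  fix x y and t :: real assume "x \<in> X" "y \<in> X" "0 \<le> t \<and> t \<le> 1"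
  then have "(\<Sum>i\<in>I. f i (\<lambda>p. t * x p + (1 - t) * y p)) \<le> (\<Sum>i\<in>I. t * f i x + (1 - t) * f i y)"
    using assms by (intro sum_mono) (auto simp: convex_fun_on_def)
  then show "(\<Sum>i\<in>I. f i (\<lambda>p. t * x p + (1 - t) * y p)) \<le> t * (\<Sum>i\<in>I. f i x) + (1 - t) * (\<Sum>i\<in>I. f i y)"
    by (simp add: sum.distrib sum_distrib_left)
qed

lemma convex_fun_on_comp_sum:
  fixes g :: "real \<Rightarrow> real"
  assumes g: "convex_on J g" and X: "\<And>y. y \<in> X \<Longrightarrow> (\<Sum>k\<in>K. y (e k)) \<in> J"
  shows "convex_fun_on X (\<lambda>y. g (\<Sum>k\<in>K. y (e k)))"
  unfolding convex_fun_on_def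
proof (intro ballI allI impI)
  fix x y and t :: real assume "x \<in> X" "y \<in> X" and t: "0 \<le> t \<and> t \<le> 1"
  have "(\<Sum>k\<in>K. t * x (e k) + (1 - t) * y (e k))
      = (1 - (1 - t)) *\<^sub>R (\<Sum>k\<in>K. x (e k)) + (1 - t) *\<^sub>R (\<Sum>k\<in>K. y (e k))"
    by (simp add: sum.distrib sum_distrib_left)
  then show "g (\<Sum>k\<in>K. t * x (e k) + (1 - t) * y (e k))
      \<le> t * g (\<Sum>k\<in>K. x (e k)) + (1 - t) * g (\<Sum>k\<in>K. y (e k))"
    using convex_onD[OF g, of "1 - t"] t X \<open>x \<in> X\<close> \<open>y \<in> X\<close> by simp
qed

lemma unit_box_bounds:
  assumes "y \<in> unit_box I"
  shows "0 \<le> y q" "y q \<le> 1"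
  using assms by (auto simp: unit_box_def)

lemma cost_funD:
  assumes "cost_fun g"
  shows "mono_on {0..} g" "convex_on {0..} g"
  using assms by (auto simp: cost_fun_def)

theorem lemma1:
  fixes V :: "'v set" and E :: "('v \<times> 'v) set" and C :: "'k set"
    and S :: "'k \<Rightarrow> 'v set" and r :: "'v \<Rightarrow> 'k \<Rightarrow> real"
    and nh :: "'v \<Rightarrow> 'k \<Rightarrow> 'v"
    and D :: "'v \<Rightarrow> 'v \<Rightarrow> real \<Rightarrow> real" and Bn :: "'v \<Rightarrow> real \<Rightarrow> real"
    and A B :: "('v \<times> 'k \<Rightarrow> real) \<Rightarrow> real"
  assumes finV: "finite V" and finC: "finite C"
    and E_sub: "E \<subseteq> V \<times> V"
    and E_sym: "\<And>i j. (i, j) \<in> E \<Longrightarrow> (j, i) \<in> E"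
    and S_sub: "\<And>k. k \<in> C \<Longrightarrow> S k \<subseteq> V"
    and S_ne: "\<And>k. k \<in> C \<Longrightarrow> S k \<noteq> {}"
    and r_nonneg: "\<And>v k. v \<in> V \<Longrightarrow> k \<in> C \<Longrightarrow> r v k \<ge> 0"
    and D_cost: "\<And>i j. (i, j) \<in> E \<Longrightarrow> cost_fun (D i j)"
    and B_cost: "\<And>i. i \<in> V \<Longrightarrow> cost_fun (Bn i)"
    and nh_nbr: "\<And>i k. i \<in> V \<Longrightarrow> k \<in> C \<Longrightarrow> i \<notin> S k \<Longrightarrow> (i, nh i k) \<in> E"
    and reach: "\<And>v k. v \<in> V \<Longrightarrow> k \<in> C \<Longrightarrow> \<exists>n. ((\<lambda>i. nh i k) ^^ n) v \<in> S k"
    and loopfree: "\<And>v k. v \<in> V \<Longrightarrow> k \<in> C \<Longrightarrow> distinct (route_path nh S v k)"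
    and A_def: "\<And>y. A y = (\<Sum>(i, j)\<in>E. D i j (flow V C nh S r (\<lambda>_. 0) i j))
                          - (\<Sum>(i, j)\<in>E. D i j (flow V C nh S r y i j))"
    and B_def: "\<And>y. B y = (\<Sum>i\<in>V. Bn i (\<Sum>k\<in>C. y (i, k)))"
  shows "(\<forall>y\<in>unit_box (var_index V C S). A y \<ge> 0)
       \<and> (\<forall>y\<in>unit_box (var_index V C S). \<forall>y'\<in>unit_box (var_index V C S). y \<le> y' \<longrightarrow> A y \<le> A y')
       \<and> dr_submodular_on (unit_box (var_index V C S)) A
       \<and> convex_fun_on (unit_box (var_index V C S)) B"
proof -
  let ?X = "unit_box (var_index V C S)"
  have route: "\<forall>v\<in>V. \<forall>k\<in>C. distinct (route_path nh S v k) \<and> 0 \<le> r v k"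
    using loopfree r_nonneg by auto
  have A_mono: "A y \<le> A y'" if "y \<le> y'" "y' \<in> ?X" for y y'
  proof -
    have "(\<Sum>(i, j)\<in>E. D i j (flow V C nh S r y' i j)) \<le> (\<Sum>(i, j)\<in>E. D i j (flow V C nh S r y i j))"
      by (rule cost_sum_flow_antimono[OF cost_funD(1)[OF D_cost]])
        (use route that unit_box_bounds in auto)
    then show ?thesis by (simp add: A_def)
  qed
  have "A y \<ge> 0" if "y \<in> ?X" for y
    using A_mono[of "\<lambda>_. 0" y] that unit_box_bounds[OF that] by (simp add: A_def le_fun_def)
  moreover have "dr_submodular_on ?X A"
    unfolding dr_submodular_on_def
  proof (intro allI impI, elim conjE)
    fix a b :: "'v \<times> 'k \<Rightarrow> real" and n \<epsilon>
    assume b: "b \<in> ?X" and ab: "a \<le> b" and \<epsilon>: "0 \<le> \<epsilon>" and b': "b(n := b n + \<epsilon>) \<in> ?X"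
    have "(\<Sum>(i, j)\<in>E. D i j (flow V C nh S r b i j))
        - (\<Sum>(i, j)\<in>E. D i j (flow V C nh S r (b(n := b n + \<epsilon>)) i j))
      \<le> (\<Sum>(i, j)\<in>E. D i j (flow V C nh S r a i j))
        - (\<Sum>(i, j)\<in>E. D i j (flow V C nh S r (a(n := a n + \<epsilon>)) i j))"
      using cost_funD[OF D_cost] unit_box_bounds(2)[OF b] unit_box_bounds(2)[OF b', of n]
      by (intro cost_sum_flow_decrement_antimono[OF _ route ab _ _ \<epsilon>]) auto
    then show "A (b(n := b n + \<epsilon>)) - A b \<le> A (a(n := a n + \<epsilon>)) - A a"
      by (simp add: A_def)
  qed
  moreover have "convex_fun_on ?X B"
    unfolding B_def[abs_def]
    using cost_funD(2)[OF B_cost]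
    by (intro convex_fun_on_sum convex_fun_on_comp_sum[where J = "{0..}"])
      (auto intro!: sum_nonneg simp: unit_box_def)
  ultimately show ?thesis using A_mono by blast
qed

end
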